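(* Let $X$ be a set, let $R_1,R_2$ be binary relations on $X$, and let $x\in X$. Assume that (1) $R_2$ is well-founded, and (2) there exist a set $B_1\subseteq X$, a well-founded relation $R_1'$ on $X$ and a transitive relation $E_1$ on $X$ such that: (2.i) $x\in B_1$, and for all $a,b\in X$, if $a\in B_1$ and $a \xrightarrow{R_1\cup R_2} b$ then $b\in B_1$; (2.ii) for all $a,b$, if $a\in B_1$ and $a\xrightarrow{R_1} b$ then $a\xrightarrow{R_1'} b$; (2.iii) for all $a,b,c$, if $a\xrightarrow{R_1'} b$ and $b\xrightarrow{E_1} c$ then $a\xrightarrow{R_1'} c$; (2.iv) for all $a,b$, if $a\xrightarrow{R_2} b$ then $a\xrightarrow{E_1} b$. Then $\mathsf{Acc}(R_1\cup R_2, x)$ holds.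
   Context: For a relation $R$ on $X$ write $a\xrightarrow{R} b$ for $(a,b)\in R$. $R$ is called well-founded if every element is accessible, i.e. there is no infinite sequence $x_0,x_1,x_2,\dots$ with $x_i\xrightarrow{R}x_{i+1}$ for all $i$. $\mathsf{Acc}(R,x)$ ("$x$ is accessible for $R$") means that every sequence $x=x_0\xrightarrow{R}x_1\xrightarrow{R}\cdots$ starting from $x$ is finite (constructively: the inductive predicate stating that all $R$-successors of $x$ are accessible). *)

theory Defs
  imports Main
begin

text \<open>Paper convention: a pair (a,b) in R means a steps to b (b is an R-successor of a).
  R is well-founded iff there is no infinite forward chain; in Isabelle's convention
  (wf r: no infinite chain with (x_(i+1), x_i) in r) this is wf of the converse.\<close>

definition wf_succ :: "('a \<times> 'a) set \<Rightarrow> bool" where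
  "wf_succ R \<longleftrightarrow> wf (R\<inverse>)"

definition Acc :: "('a \<times> 'a) set \<Rightarrow> 'a \<Rightarrow> bool" where
  "Acc R x \<longleftrightarrow> x \<in> Wellfounded.acc (R\<inverse>)"

end

theory Submission
  imports Defs
begin

text \<open>Since \<open>R\<^sub>2\<close> is well-founded, an element is accessible for \<open>R\<^sub>1 \<union> R\<^sub>2\<close> as soon as
  the \<open>R\<^sub>1\<close>-successors of all its \<open>R\<^sub>2\<close>-descendants are. Inside \<open>B\<^sub>1\<close> the \<open>R\<^sub>1\<close>-steps are
  \<open>R\<^sub>1'\<close>-steps, and an \<open>R\<^sub>2\<close>-path after an \<open>R\<^sub>1'\<close>-step \<open>a \<rightarrow> b\<close> stays \<open>R\<^sub>1'\<close>-related to \<open>a\<close>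
  because \<open>R\<^sub>2 \<subseteq> E\<^sub>1\<close> and \<open>R\<^sub>1'\<close> absorbs \<open>E\<^sub>1\<close> on the right. So well-founded induction along
  \<open>R\<^sub>1'\<close> shows that every \<open>R\<^sub>1'\<close>-successor in \<open>B\<^sub>1\<close> is accessible, and one more application
  of the first observation gives accessibility of \<open>x\<close>.\<close>

lemma acc_union_if_R2_closed_R1_successors_acc:
  assumes wf_R2: "wf (R2\<inverse>)"
    and "b \<in> D"
    and R2_closed: "\<And>d c. d \<in> D \<Longrightarrow> (d, c) \<in> R2 \<Longrightarrow> c \<in> D"
    and R1_acc: "\<And>d c. d \<in> D \<Longrightarrow> (d, c) \<in> R1 \<Longrightarrow> c \<in> Wellfounded.acc ((R1 \<union> R2)\<inverse>)"
  shows "b \<in> Wellfounded.acc ((R1 \<union> R2)\<inverse>)"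
  using wf_R2 \<open>b \<in> D\<close>
proof (induction b rule: wf_induct_rule)
  case (less b)
  show ?case
  proof (rule accI)
    fix c
    assume "(c, b) \<in> (R1 \<union> R2)\<inverse>"
    then consider "(b, c) \<in> R1" | "(b, c) \<in> R2" by blast
    then show "c \<in> Wellfounded.acc ((R1 \<union> R2)\<inverse>)"
    proof cases
      case 1
      then show ?thesis using R1_acc less.prems by blast
    next
      case 2
      then show ?thesis using less.IH R2_closed less.prems by blast
    qed
  qed
qed

lemma acc_union_if_R1_decreasing_on_closed_set:
  assumes wf_R2: "wf (R2\<inverse>)"
    and wf_R1': "wf (R1'\<inverse>)"
    and "x \<in> B"
    and closed: "\<And>a b. a \<in> B \<Longrightarrow> (a, b) \<in> R1 \<union> R2 \<Longrightarrow> b \<in> B"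
    and R1_R1': "\<And>a b. a \<in> B \<Longrightarrow> (a, b) \<in> R1 \<Longrightarrow> (a, b) \<in> R1'"
    and R1'_E: "\<And>a b c. (a, b) \<in> R1' \<Longrightarrow> (b, c) \<in> E \<Longrightarrow> (a, c) \<in> R1'"
    and R2_E: "\<And>a b. (a, b) \<in> R2 \<Longrightarrow> (a, b) \<in> E"
  shows "x \<in> Wellfounded.acc ((R1 \<union> R2)\<inverse>)"
proof -
  have R1'_successors_acc: "b \<in> Wellfounded.acc ((R1 \<union> R2)\<inverse>)"
    if "b \<in> B" "(a, b) \<in> R1'" for a b
    using wf_R1' that
  proof (induction a arbitrary: b rule: wf_induct_rule)
    case (less a)
    let ?D = "{d \<in> B. (a, d) \<in> R1'}"
    show ?case
    proof (rule acc_union_if_R2_closed_R1_successors_acc[OF wf_R2, where D = ?D])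
      show "\<And>d c. d \<in> ?D \<Longrightarrow> (d, c) \<in> R2 \<Longrightarrow> c \<in> ?D"
        using closed R1'_E R2_E by blast
      show "\<And>d c. d \<in> ?D \<Longrightarrow> (d, c) \<in> R1 \<Longrightarrow> c \<in> Wellfounded.acc ((R1 \<union> R2)\<inverse>)"
        using less.IH closed R1_R1' by blast
    qed (use less.prems in blast)
  qed
  show ?thesis
    by (rule acc_union_if_R2_closed_R1_successors_acc[OF wf_R2, where D = B])
      (use \<open>x \<in> B\<close> closed R1_R1' R1'_successors_acc in blast)+
qed

theorem proposition1:
  fixes R1 R2 :: "('a \<times> 'a) set" and x :: 'a
  assumes "wf_succ R2"
    and "\<exists>B1 R1' E1.
           wf_succ R1' \<and> trans E1 \<and>
           x \<in> B1 \<and> (\<forall>a b. a \<in> B1 \<and> (a, b) \<in> R1 \<union> R2 \<longrightarrow> b \<in> B1) \<and>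
           (\<forall>a b. a \<in> B1 \<and> (a, b) \<in> R1 \<longrightarrow> (a, b) \<in> R1') \<and>
           (\<forall>a b c. (a, b) \<in> R1' \<and> (b, c) \<in> E1 \<longrightarrow> (a, c) \<in> R1') \<and>
           (\<forall>a b. (a, b) \<in> R2 \<longrightarrow> (a, b) \<in> E1)"
  shows "Acc (R1 \<union> R2) x"
proof -
  from assms(2) obtain B1 R1' E1 where
    "wf_succ R1'" "x \<in> B1"
    "\<forall>a b. a \<in> B1 \<and> (a, b) \<in> R1 \<union> R2 \<longrightarrow> b \<in> B1"
    "\<forall>a b. a \<in> B1 \<and> (a, b) \<in> R1 \<longrightarrow> (a, b) \<in> R1'"
    "\<forall>a b c. (a, b) \<in> R1' \<and> (b, c) \<in> E1 \<longrightarrow> (a, c) \<in> R1'"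
    "\<forall>a b. (a, b) \<in> R2 \<longrightarrow> (a, b) \<in> E1"
    by blast
  then have "x \<in> Wellfounded.acc ((R1 \<union> R2)\<inverse>)"
    using assms(1) by (intro acc_union_if_R1_decreasing_on_closed_set[where R1' = R1' and E = E1])
      (auto simp: wf_succ_def)
  then show ?thesis
    by (simp add: Acc_def)
qed

end
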